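(* $(\Sigma^{\mathrm{mod}}_{\mathrm{ADF}}\setminus\{\emptyset\})\subseteq\Sigma^{\mathrm{prf}}_{\mathrm{ADF}}$.
   Context: Let $A$ be a finite set of statements; an interpretation is $v:A\to\{\mathbf{t},\mathbf{f},\mathbf{u}\}$. The information ordering is $\mathbf{u}<_i\mathbf{t}$, $\mathbf{u}<_i\mathbf{f}$, extended pointwise; $[v]_2$ is the set of two-valued interpretations extending $v$. An ADF is $D=(A,L,C)$ with an acceptance formula $\varphi_a$ over the parents of each statement $a$. $\Gamma_D(v)(a)$ is the greatest lower bound w.r.t. $\leq_i$ (consensus: $\mathbf{t}$ if all $\mathbf{t}$, $\mathbf{f}$ if all $\mathbf{f}$, else $\mathbf{u}$) of $\{w(\varphi_a)\mid w\in[v]_2\}$. $v$ is admissible iff $v\leq_i\Gamma_D(v)$, preferred iff $\leq_i$-maximal admissible, a two-valued model iff two-valued and $\Gamma_D(v)=v$. The signature of ADFs under semantics $\sigma$ is $\Sigma^\sigma_{\mathrm{ADF}}=\{\sigma(D)\mid D \text{ an ADF over } A\}$, where $\mathrm{mod}(D)$ and $\mathrm{prf}(D)$ are the sets of two-valued models and preferred interpretations of $D$. *)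

theory Defs
  imports Main
begin

datatype tv = TT | FF | UU

datatype 'a form = Atom 'a | Top | Bot | Neg "'a form"
  | Conj "'a form" "'a form" | Disj "'a form" "'a form"

fun atoms :: "'a form \<Rightarrow> 'a set" where
  "atoms (Atom a) = {a}" | "atoms Top = {}" | "atoms Bot = {}"
| "atoms (Neg f) = atoms f" | "atoms (Conj f g) = atoms f \<union> atoms g"
| "atoms (Disj f g) = atoms f \<union> atoms g"

fun eval :: "('a \<Rightarrow> tv) \<Rightarrow> 'a form \<Rightarrow> tv" where
  "eval w (Atom a) = w a" | "eval w Top = TT" | "eval w Bot = FF"
| "eval w (Neg f) = (if eval w f = TT then FF else TT)"
| "eval w (Conj f g) = (if eval w f = TT \<and> eval w g = TT then TT else FF)"
| "eval w (Disj f g) = (if eval w f = TT \<or> eval w g = TT then TT else FF)"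

definition interp :: "'a set \<Rightarrow> ('a \<Rightarrow> tv) \<Rightarrow> bool" where
  "interp A v \<longleftrightarrow> (\<forall>a. a \<notin> A \<longrightarrow> v a = UU)"

definition two_valued :: "'a set \<Rightarrow> ('a \<Rightarrow> tv) \<Rightarrow> bool" where
  "two_valued A v \<longleftrightarrow> interp A v \<and> (\<forall>a\<in>A. v a \<noteq> UU)"

definition leq_i :: "('a \<Rightarrow> tv) \<Rightarrow> ('a \<Rightarrow> tv) \<Rightarrow> bool" where
  "leq_i v w \<longleftrightarrow> (\<forall>a. v a = UU \<or> v a = w a)"

definition completions :: "'a set \<Rightarrow> ('a \<Rightarrow> tv) \<Rightarrow> ('a \<Rightarrow> tv) set" where
  "completions A v = {w. two_valued A w \<and> leq_i v w}"

definition consensus :: "tv set \<Rightarrow> tv" where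
  "consensus S = (if S \<subseteq> {TT} then TT else if S \<subseteq> {FF} then FF else UU)"

definition is_adf :: "'a set \<Rightarrow> ('a \<times> 'a) set \<Rightarrow> ('a \<Rightarrow> 'a form) \<Rightarrow> bool" where
  "is_adf A L phi \<longleftrightarrow> L \<subseteq> A \<times> A \<and> (\<forall>a\<in>A. atoms (phi a) \<subseteq> {b. (b, a) \<in> L})"

definition Gamma :: "'a set \<Rightarrow> ('a \<Rightarrow> 'a form) \<Rightarrow> ('a \<Rightarrow> tv) \<Rightarrow> ('a \<Rightarrow> tv)" where
  "Gamma A phi v = (\<lambda>a. if a \<in> A then consensus {eval w (phi a) | w. w \<in> completions A v} else UU)"

definition admissible :: "'a set \<Rightarrow> ('a \<Rightarrow> 'a form) \<Rightarrow> ('a \<Rightarrow> tv) \<Rightarrow> bool" where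
  "admissible A phi v \<longleftrightarrow> interp A v \<and> leq_i v (Gamma A phi v)"

definition preferred :: "'a set \<Rightarrow> ('a \<Rightarrow> 'a form) \<Rightarrow> ('a \<Rightarrow> tv) \<Rightarrow> bool" where
  "preferred A phi v \<longleftrightarrow> admissible A phi v \<and>
     (\<forall>u. admissible A phi u \<and> leq_i v u \<longrightarrow> u = v)"

definition two_valued_model :: "'a set \<Rightarrow> ('a \<Rightarrow> 'a form) \<Rightarrow> ('a \<Rightarrow> tv) \<Rightarrow> bool" where
  "two_valued_model A phi v \<longleftrightarrow> two_valued A v \<and> Gamma A phi v = v"

definition mod_adf :: "'a set \<Rightarrow> ('a \<Rightarrow> 'a form) \<Rightarrow> ('a \<Rightarrow> tv) set" where
  "mod_adf A phi = {v. two_valued_model A phi v}"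

definition prf_adf :: "'a set \<Rightarrow> ('a \<Rightarrow> 'a form) \<Rightarrow> ('a \<Rightarrow> tv) set" where
  "prf_adf A phi = {v. preferred A phi v}"

definition sig_mod :: "'a set \<Rightarrow> ('a \<Rightarrow> tv) set set" where
  "sig_mod A = {mod_adf A phi | L phi. is_adf A L phi}"

definition sig_prf :: "'a set \<Rightarrow> ('a \<Rightarrow> tv) set set" where
  "sig_prf A = {prf_adf A phi | L phi. is_adf A L phi}"

end

theory Submission
  imports Defs
begin

text \<open>Given a nonempty set V of two-valued interpretations, let \<chi> be a formula over A that is
  true exactly on the members of V and give every statement a the acceptance formula
  \<chi> \<leftrightarrow> a. Each member of V is then a two-valued model, hence preferred. Conversely, if an
  admissible u decides some a, then the completion w of u setting every undecided statement true must lie in V: otherwise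
  \<chi> \<leftrightarrow> a evaluates under w to the opposite of u a, so \<Gamma>(u) cannot agree with u on a.
  Hence every admissible interpretation lies below a member of V, and the preferred
  interpretations are exactly V.\<close>

definition conj_list :: "'a form list \<Rightarrow> 'a form" where
  "conj_list fs = foldr Conj fs Top"

definition disj_list :: "'a form list \<Rightarrow> 'a form" where
  "disj_list fs = foldr Disj fs Bot"

definition iff_form :: "'a form \<Rightarrow> 'a form \<Rightarrow> 'a form" where
  "iff_form f g = Disj (Conj f g) (Conj (Neg f) (Neg g))"

lemma eval_conj_list: "eval w (conj_list fs) = TT \<longleftrightarrow> (\<forall>f\<in>set fs. eval w f = TT)"
  by (induction fs) (simp_all add: conj_list_def)

lemma eval_disj_list: "eval w (disj_list fs) = TT \<longleftrightarrow> (\<exists>f\<in>set fs. eval w f = TT)"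
  by (induction fs) (simp_all add: disj_list_def)

lemma atoms_conj_list: "atoms (conj_list fs) = (\<Union>f\<in>set fs. atoms f)"
  by (induction fs) (simp_all add: conj_list_def)

lemma atoms_disj_list: "atoms (disj_list fs) = (\<Union>f\<in>set fs. atoms f)"
  by (induction fs) (simp_all add: disj_list_def)

lemma eval_iff_form: "eval w (iff_form f g) = TT \<longleftrightarrow> (eval w f = TT \<longleftrightarrow> eval w g = TT)"
  by (simp add: iff_form_def)

lemma eval_iff_form_neq_UU: "eval w (iff_form f g) \<noteq> UU"
  by (simp add: iff_form_def)

lemma atoms_iff_form: "atoms (iff_form f g) = atoms f \<union> atoms g"
  by (auto simp: iff_form_def)

lemma two_valued_ext:
  assumes "two_valued A v" "two_valued A w" "\<forall>b\<in>A. v b = w b"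
  shows "v = w"
  using assms by (auto simp: two_valued_def interp_def fun_eq_iff)

lemma two_valued_leq_i_maximal:
  assumes "two_valued A v" "interp A u" "leq_i v u"
  shows "u = v"
  using assms by (auto simp: two_valued_def interp_def leq_i_def fun_eq_iff) metis

lemma finite_two_valued:
  assumes "finite A"
  shows "finite {v. two_valued A v}"
proof (rule finite_subset)
  show "{v. two_valued A v} \<subseteq> {f. \<forall>x. (x \<in> A \<longrightarrow> f x \<in> UNIV) \<and> (x \<notin> A \<longrightarrow> f x = UU)}"
    by (auto simp: two_valued_def interp_def)
  have "(UNIV :: tv set) = {TT, FF, UU}"
    using tv.exhaust by blast
  then have "finite (UNIV :: tv set)"
    by (metis finite.emptyI finite_insert)
  then show "finite {f. \<forall>x. (x \<in> A \<longrightarrow> f x \<in> (UNIV :: tv set)) \<and> (x \<notin> A \<longrightarrow> f x = UU)}"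
    by (intro finite_set_of_finite_funs assms)
qed

lemma characteristic_form_exists:
  assumes "finite A" and V: "\<forall>v\<in>V. two_valued A v"
  obtains \<chi> where "atoms \<chi> \<subseteq> A" "\<And>w. two_valued A w \<Longrightarrow> eval w \<chi> = TT \<longleftrightarrow> w \<in> V"
proof -
  obtain xs where xs: "set xs = A"
    using assms(1) finite_list by blast
  have "finite V"
    using finite_subset[OF _ finite_two_valued[OF assms(1)]] V by blast
  then obtain vs where vs: "set vs = V"
    using finite_list by blast
  define lit :: "('a \<Rightarrow> tv) \<Rightarrow> 'a \<Rightarrow> 'a form" where
    "lit v b = (if v b = TT then Atom b else Neg (Atom b))" for v b
  define point :: "('a \<Rightarrow> tv) \<Rightarrow> 'a form" where
    "point v = conj_list (map (lit v) xs)" for v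
  define \<chi> where "\<chi> = disj_list (map point vs)"
  have "atoms \<chi> \<subseteq> A"
    by (auto simp: \<chi>_def point_def lit_def atoms_disj_list atoms_conj_list xs)
  moreover have "eval w \<chi> = TT \<longleftrightarrow> w \<in> V" if w: "two_valued A w" for w
  proof -
    have "eval w (point v) = TT \<longleftrightarrow> v = w" if v: "v \<in> V" for v
    proof -
      have "eval w (lit v b) = TT \<longleftrightarrow> v b = w b" if "b \<in> A" for b
        using that w V v by (cases "v b"; cases "w b") (auto simp: lit_def two_valued_def)
      then show ?thesis
        using two_valued_ext[of A v w] V v w by (auto simp: point_def eval_conj_list xs)
    qed
    then show ?thesis
      by (auto simp: \<chi>_def eval_disj_list vs)
  qed
  ultimately show thesis
    using that by blast
qed

lemma completions_two_valued:
  assumes "two_valued A v"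
  shows "completions A v = {v}"
  using two_valued_leq_i_maximal[OF assms] assms
  by (auto simp: completions_def two_valued_def leq_i_def)

lemma Gamma_two_valued:
  assumes "two_valued A v"
  shows "Gamma A phi v = (\<lambda>a. if a \<in> A then eval v (phi a) else UU)"
proof -
  have consensus_singleton: "consensus {x} = x" for x
    by (cases x) (auto simp: consensus_def)
  have values_singleton: "{eval w (phi a) | w. w \<in> completions A v} = {eval v (phi a)}" for a
    unfolding completions_two_valued[OF assms] by blast
  show ?thesis
    unfolding Gamma_def values_singleton consensus_singleton ..
qed

lemma two_valued_model_preferred:
  assumes "two_valued_model A phi v"
  shows "preferred A phi v"
  using assms two_valued_leq_i_maximal
  by (auto simp: preferred_def admissible_def two_valued_model_def two_valued_def leq_i_def)

context
  fixes A :: "'a set" and V :: "('a \<Rightarrow> tv) set" and \<chi> :: "'a form"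
  assumes V_two_valued: "\<forall>v\<in>V. two_valued A v"
    and \<chi>_characteristic: "\<And>w. two_valued A w \<Longrightarrow> eval w \<chi> = TT \<longleftrightarrow> w \<in> V"
begin

lemma eval_iff_characteristic:
  assumes "two_valued A w"
  shows "eval w (iff_form \<chi> (Atom a)) = TT \<longleftrightarrow> (w \<in> V \<longleftrightarrow> w a = TT)"
  by (simp add: eval_iff_form \<chi>_characteristic[OF assms])

lemma iff_characteristic_model:
  assumes "v \<in> V"
  shows "two_valued_model A (\<lambda>a. iff_form \<chi> (Atom a)) v"
proof -
  have v: "two_valued A v"
    using V_two_valued assms by blast
  have "eval v (iff_form \<chi> (Atom a)) = v a" if "a \<in> A" for a
    using eval_iff_characteristic[OF v, of a] eval_iff_form_neq_UU[of v \<chi> "Atom a"] v that assms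
    by (cases "v a"; cases "eval v (iff_form \<chi> (Atom a))") (auto simp: two_valued_def)
  then show ?thesis
    using v by (auto simp: two_valued_model_def Gamma_two_valued two_valued_def interp_def)
qed

lemma iff_characteristic_admissible_below:
  assumes "V \<noteq> {}" and adm: "admissible A (\<lambda>a. iff_form \<chi> (Atom a)) u"
  shows "\<exists>v\<in>V. leq_i u v"
proof (cases "\<forall>a. u a = UU")
  case True
  then show ?thesis
    using assms(1) by (auto simp: leq_i_def)
next
  case False
  then obtain a where ua: "u a \<noteq> UU"
    by blast
  have u: "interp A u"
    using adm by (simp add: admissible_def)
  then have a: "a \<in> A"
    using ua by (auto simp: interp_def)
  define w where "w = (\<lambda>b. if u b = UU \<and> b \<in> A then TT else u b)"
  have w: "two_valued A w" and uw: "leq_i u w"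
    using u by (auto simp: w_def two_valued_def interp_def leq_i_def)
  have "w \<in> V"
  proof (rule ccontr)
    assume "w \<notin> V"
    then have "eval w (iff_form \<chi> (Atom a)) = TT \<longleftrightarrow> u a \<noteq> TT"
      using eval_iff_characteristic[OF w] ua by (simp add: w_def)
    moreover have "w \<in> completions A u"
      using w uw by (simp add: completions_def)
    moreover have "Gamma A (\<lambda>a. iff_form \<chi> (Atom a)) u a = u a"
      using adm ua by (auto simp: admissible_def leq_i_def)
    ultimately show False
      using a ua by (cases "u a") (auto simp: Gamma_def consensus_def split: if_splits)
  qed
  then show ?thesis
    using uw by blast
qed

lemma prf_iff_characteristic:
  assumes "V \<noteq> {}"
  shows "prf_adf A (\<lambda>a. iff_form \<chi> (Atom a)) = V"
proof (intro equalityI subsetI)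
  fix u
  assume "u \<in> prf_adf A (\<lambda>a. iff_form \<chi> (Atom a))"
  then have pref: "preferred A (\<lambda>a. iff_form \<chi> (Atom a)) u"
    by (simp add: prf_adf_def)
  then obtain v where "v \<in> V" "leq_i u v"
    using iff_characteristic_admissible_below[OF assms] by (auto simp: preferred_def)
  moreover have "admissible A (\<lambda>a. iff_form \<chi> (Atom a)) v"
    using two_valued_model_preferred[OF iff_characteristic_model[OF \<open>v \<in> V\<close>]]
    by (simp add: preferred_def)
  ultimately show "u \<in> V"
    using pref by (auto simp: preferred_def)
next
  fix v
  assume "v \<in> V"
  then show "v \<in> prf_adf A (\<lambda>a. iff_form \<chi> (Atom a))"
    using two_valued_model_preferred[OF iff_characteristic_model] by (simp add: prf_adf_def)
qed

end

theorem proposition7: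
  fixes A :: "'a set"
  assumes "finite A"
  shows "sig_mod A - {{}} \<subseteq> sig_prf A"
proof
  fix V
  assume "V \<in> sig_mod A - {{}}"
  then obtain phi where V: "V = mod_adf A phi" and nonempty: "V \<noteq> {}"
    by (auto simp: sig_mod_def)
  have V_two_valued: "\<forall>v\<in>V. two_valued A v"
    using V by (simp add: mod_adf_def two_valued_model_def)
  obtain \<chi> where atoms: "atoms \<chi> \<subseteq> A"
    and char: "\<And>w. two_valued A w \<Longrightarrow> eval w \<chi> = TT \<longleftrightarrow> w \<in> V"
    using characteristic_form_exists[OF assms V_two_valued] by blast
  have "is_adf A (A \<times> A) (\<lambda>a. iff_form \<chi> (Atom a))"
    using atoms by (auto simp: is_adf_def atoms_iff_form)
  moreover have "prf_adf A (\<lambda>a. iff_form \<chi> (Atom a)) = V"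
    using prf_iff_characteristic[OF V_two_valued char nonempty] .
  ultimately show "V \<in> sig_prf A"
    unfolding sig_prf_def by blast
qed

end
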